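(* Let $n=2$ (a qubit) with reference basis $\{|1\rangle,|2\rangle\}$, and let $Z_1,Z_2$ be Hermitian operators diagonal in this basis with $\operatorname{tr}Z_jZ_k=\delta_{jk}$. Define, for a qubit state $\rho$, \[ \mathcal{C}(\rho):=\min_{\{p_l,|\psi_l\rangle\}}\sum_lp_l\,\mathcal{F}_1\Big(e^{i(\theta_1Z_1+\theta_2Z_2)}|\psi_l\rangle\langle\psi_l|e^{-i(\theta_1Z_1+\theta_2Z_2)}\Big), \] the minimum over all ensemble decompositions $\rho=\sum_lp_l|\psi_l\rangle\langle\psi_l|$. Then \[ \mathcal{C}(\rho)=(\operatorname{tr}\sigma_1\rho)^2+(\operatorname{tr}\sigma_2\rho)^2, \] where $\sigma_1,\sigma_2$ are the Pauli $x$ and $y$ matrices with respect to the reference basis.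
   Context: The arithmetic-mean QFI of a two-parameter family $\varrho_\theta$ is $\mathcal{F}_1(\varrho_\theta):=\frac12\operatorname{tr}F(\varrho_\theta)$, with $F$ the SLD-based QFI matrix $[F]_{jk}=\operatorname{Re}\operatorname{tr}(L_jL_k\varrho_\theta)$, $L_j$ Hermitian with $\partial_j\varrho_\theta=(L_j\varrho_\theta+\varrho_\theta L_j)/2$. *)

theory Defs
  imports "HOL-Analysis.Analysis"
begin

text \<open>Qubit operators are 2x2 complex matrices, type complex^2^2.
  The reference basis vectors |1>, |2> correspond to the indices (1::2) and (2::2).\<close>

type_synonym qmat = "complex^2^2"
type_synonym qvec = "complex^2"

definition cmult :: "complex \<Rightarrow> qmat \<Rightarrow> qmat" where
  "cmult c A = (\<chi> i j. c * A$i$j)"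

definition adj :: "qmat \<Rightarrow> qmat" where
  "adj A = (\<chi> i j. cnj (A$j$i))"

definition hermitian :: "qmat \<Rightarrow> bool" where
  "hermitian A \<longleftrightarrow> adj A = A"

definition diagonal_mat :: "qmat \<Rightarrow> bool" where
  "diagonal_mat A \<longleftrightarrow> (\<forall>i j. i \<noteq> j \<longrightarrow> A$i$j = 0)"

definition psd :: "qmat \<Rightarrow> bool" where
  "psd A \<longleftrightarrow> (\<forall>v::qvec. 0 \<le> Re (\<Sum>i\<in>UNIV. \<Sum>j\<in>UNIV. cnj (v$i) * A$i$j * v$j))"

definition density_op :: "qmat \<Rightarrow> bool" where
  "density_op \<rho> \<longleftrightarrow> hermitian \<rho> \<and> psd \<rho> \<and> trace \<rho> = 1"

fun mpow :: "qmat \<Rightarrow> nat \<Rightarrow> qmat" where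
  "mpow A 0 = mat 1"
| "mpow A (Suc n) = A ** mpow A n"

definition mexp :: "qmat \<Rightarrow> qmat" where
  "mexp A = (\<Sum>n. (1 / fact n) *\<^sub>R mpow A n)"

definition proj :: "qvec \<Rightarrow> qmat" where
  "proj \<psi> = (\<chi> i j. \<psi>$i * cnj (\<psi>$j))"

definition unit_vec :: "qvec \<Rightarrow> bool" where
  "unit_vec \<psi> \<longleftrightarrow> (\<Sum>i\<in>UNIV. (cmod (\<psi>$i))^2) = 1"

definition pd1 :: "(real \<Rightarrow> real \<Rightarrow> qmat) \<Rightarrow> real \<Rightarrow> real \<Rightarrow> qmat" where
  "pd1 f t1 t2 = vector_derivative (\<lambda>s. f s t2) (at t1)"

definition pd2 :: "(real \<Rightarrow> real \<Rightarrow> qmat) \<Rightarrow> real \<Rightarrow> real \<Rightarrow> qmat" where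
  "pd2 f t1 t2 = vector_derivative (\<lambda>s. f t1 s) (at t2)"

definition is_sld :: "qmat \<Rightarrow> qmat \<Rightarrow> qmat \<Rightarrow> bool" where
  "is_sld \<rho> D L \<longleftrightarrow> hermitian L \<and> D = (1/2) *\<^sub>R (L ** \<rho> + \<rho> ** L)"

definition sld :: "qmat \<Rightarrow> qmat \<Rightarrow> qmat" where
  "sld \<rho> D = (SOME L. is_sld \<rho> D L)"

definition qfi :: "(real \<Rightarrow> real \<Rightarrow> qmat) \<Rightarrow> real \<Rightarrow> real \<Rightarrow> nat \<Rightarrow> nat \<Rightarrow> real" where
  "qfi f t1 t2 j k =
     (let L = (\<lambda>m. sld (f t1 t2) (if m = 1 then pd1 f t1 t2 else pd2 f t1 t2))
      in Re (trace (L j ** L k ** f t1 t2)))"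

definition qfi_mean :: "(real \<Rightarrow> real \<Rightarrow> qmat) \<Rightarrow> real \<Rightarrow> real \<Rightarrow> real" where
  "qfi_mean f t1 t2 = (qfi f t1 t2 1 1 + qfi f t1 t2 2 2) / 2"

definition enc_family :: "qmat \<Rightarrow> qmat \<Rightarrow> qvec \<Rightarrow> real \<Rightarrow> real \<Rightarrow> qmat" where
  "enc_family Z1 Z2 \<psi> t1 t2 =
     mexp (cmult \<i> (t1 *\<^sub>R Z1 + t2 *\<^sub>R Z2)) ** proj \<psi> **
     mexp (cmult (- \<i>) (t1 *\<^sub>R Z1 + t2 *\<^sub>R Z2))"

definition is_ensemble :: "qmat \<Rightarrow> (real \<times> qvec) list \<Rightarrow> bool" where
  "is_ensemble \<rho> E \<longleftrightarrow>
     (\<forall>(p, \<psi>) \<in> set E. 0 < p \<and> unit_vec \<psi>) \<and>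
     sum_list (map fst E) = 1 \<and>
     \<rho> = sum_list (map (\<lambda>(p, \<psi>). p *\<^sub>R proj \<psi>) E)"

definition ens_values :: "qmat \<Rightarrow> qmat \<Rightarrow> real \<Rightarrow> real \<Rightarrow> qmat \<Rightarrow> real set" where
  "ens_values Z1 Z2 t1 t2 \<rho> =
     {sum_list (map (\<lambda>(p, \<psi>). p * qfi_mean (enc_family Z1 Z2 \<psi>) t1 t2) E) | E. is_ensemble \<rho> E}"

text \<open>The convex-roof quantity C(rho) (a minimum; see the theorem, which asserts attainment).\<close>
definition coh :: "qmat \<Rightarrow> qmat \<Rightarrow> real \<Rightarrow> real \<Rightarrow> qmat \<Rightarrow> real" where
  "coh Z1 Z2 t1 t2 \<rho> = Inf (ens_values Z1 Z2 t1 t2 \<rho>)"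

definition sigma1 :: qmat where
  "sigma1 = (\<chi> i j. if i \<noteq> j then 1 else 0)"

definition sigma2 :: qmat where
  "sigma2 = (\<chi> i j. if i = 1 \<and> j = 2 then - \<i> else if i = 2 \<and> j = 1 then \<i> else 0)"

end

theory Submission
  imports Defs
begin

text \<open>
  For diagonal generators \<open>Z\<^sub>j = diag (z\<^sub>j\<^sub>1, z\<^sub>j\<^sub>2)\<close>, the unitary
  \<open>exp (\<i> (\<theta>\<^sub>1 Z\<^sub>1 + \<theta>\<^sub>2 Z\<^sub>2))\<close> only multiplies the amplitudes of \<open>\<psi>\<close> by phases,
  so the encoded family stays pure with \<open>\<partial>\<^sub>j\<rho> = \<i>[Z\<^sub>j, \<rho>]\<close>. For a pure state the SLD is
  \<open>2 \<partial>\<^sub>j\<rho>\<close>, which gives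
  \<open>\<F>\<^sub>1 = 2 ((z\<^sub>1\<^sub>1 - z\<^sub>1\<^sub>2)\<^sup>2 + (z\<^sub>2\<^sub>1 - z\<^sub>2\<^sub>2)\<^sup>2) \<bar>\<psi>\<^sub>1\<bar>\<^sup>2 \<bar>\<psi>\<^sub>2\<bar>\<^sup>2\<close>, and orthonormality
  of \<open>Z\<^sub>1, Z\<^sub>2\<close> makes the bracket equal to 2. So \<open>\<C>(\<rho>)\<close> is the convex roof of
  \<open>4 \<bar>\<psi>\<^sub>1\<bar>\<^sup>2 \<bar>\<psi>\<^sub>2\<bar>\<^sup>2\<close>. By the triangle inequality and convexity of the square, every
  ensemble gives at least \<open>4 \<bar>\<rho>\<^sub>1\<^sub>2\<bar>\<^sup>2\<close>, and equality holds for the decomposition of \<open>\<rho>\<close>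
  into the two pure states with the same off-diagonal entry \<open>\<rho>\<^sub>1\<^sub>2\<close>. Finally
  \<open>(tr \<sigma>\<^sub>1\<rho>)\<^sup>2 + (tr \<sigma>\<^sub>2\<rho>)\<^sup>2 = 4 \<bar>\<rho>\<^sub>1\<^sub>2\<bar>\<^sup>2\<close>.
\<close>

lemma qvec_eq_iff: "(x::'a^2) = y \<longleftrightarrow> x$1 = y$1 \<and> x$2 = y$2"
  by (simp add: vec_eq_iff forall_2)

lemma qmat_eq_iff:
  "(A::'a^2^2) = B \<longleftrightarrow> A$1$1 = B$1$1 \<and> A$1$2 = B$1$2 \<and> A$2$1 = B$2$1 \<and> A$2$2 = B$2$2"
  by (simp add: vec_eq_iff forall_2)

lemma qmat_mult_nth: "((A::qmat) ** B) $ i $ j = A$i$1 * B$1$j + A$i$2 * B$2$j"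
  by (simp add: matrix_matrix_mult_def sum_2)

lemma qmat_vec_mult_nth: "((A::qmat) *v v) $ i = A$i$1 * v$1 + A$i$2 * v$2"
  by (simp add: matrix_vector_mult_def sum_2)

lemma scaleR_matrix_vector_mult: "((c::real) *\<^sub>R (A::qmat)) *v v = c *\<^sub>R (A *v v)"
  by (simp add: qvec_eq_iff qmat_vec_mult_nth algebra_simps)

lemma trace_qmat: "trace (A::qmat) = A$1$1 + A$2$2"
  by (simp add: trace_def sum_2)

lemma hermitian_cnj_nth: "hermitian L \<Longrightarrow> cnj (L$i$j) = L$j$i"
  unfolding hermitian_def adj_def vec_eq_iff by simp

lemma Im_hermitian_diag: "hermitian L \<Longrightarrow> Im (L$k$k) = 0"
  using hermitian_cnj_nth[of L k k] by (simp add: complex_eq_iff)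

lemma hermitian_scaleR: "hermitian A \<Longrightarrow> hermitian ((c::real) *\<^sub>R A)"
  unfolding hermitian_def adj_def by (simp add: vec_eq_iff)

lemma cnj_mult_self: "cnj z * z = of_real ((cmod z)^2)"
  by (subst complex_norm_square) (simp add: mult.commute)

lemma has_vector_derivative_vec:
  fixes g :: "real \<Rightarrow> 'a::euclidean_space ^ 'n"
  assumes "\<And>i. ((\<lambda>s. g s $ i) has_vector_derivative G $ i) F"
  shows "(g has_vector_derivative G) F"
proof -
  have expand: "x = (\<Sum>i\<in>UNIV. axis i (x $ i))" for x :: "'a ^ 'n"
    by (simp add: vec_eq_iff sum_component axis_def)
  have axis_linear: "bounded_linear (axis i :: 'a \<Rightarrow> 'a ^ 'n)" for i
    unfolding linear_conv_bounded_linear[symmetric]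
    by (rule linearI) (simp_all add: vec_eq_iff axis_def)
  have "((\<lambda>s. \<Sum>i\<in>UNIV. axis i (g s $ i)) has_vector_derivative (\<Sum>i\<in>UNIV. axis i (G $ i))) F"
    by (intro has_vector_derivative_sum bounded_linear.has_vector_derivative[OF axis_linear] assms)
  moreover have "(\<lambda>s. \<Sum>i\<in>UNIV. axis i (g s $ i)) = g"
    using expand by (intro ext) (rule sym)
  ultimately show ?thesis
    using expand[of G] by (simp only:)
qed

section \<open>SLD of a pure state\<close>

definition braket :: "qvec \<Rightarrow> qvec \<Rightarrow> complex" where
  "braket u v = (\<Sum>i\<in>UNIV. cnj (u$i) * v$i)"

lemma braket_2: "braket u v = cnj (u$1) * v$1 + cnj (u$2) * v$2"
  by (simp add: braket_def sum_2)

lemma braket_self_unit: "unit_vec \<psi> \<Longrightarrow> braket \<psi> \<psi> = 1"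
  unfolding unit_vec_def braket_def cnj_mult_self of_real_sum[symmetric] by simp

lemma braket_hermitian: "hermitian L \<Longrightarrow> braket u (L *v v) = braket (L *v u) v"
  unfolding braket_2 qmat_vec_mult_nth by (simp add: hermitian_cnj_nth[of L] algebra_simps)

lemma proj_mult_vec: "proj \<phi> *v v = braket \<phi> v *s \<phi>"
  unfolding qvec_eq_iff qmat_vec_mult_nth braket_2 by (simp add: proj_def algebra_simps)

lemma trace_mult_proj: "trace (A ** proj \<phi>) = braket \<phi> (A *v \<phi>)"
  unfolding trace_qmat qmat_mult_nth braket_2 qmat_vec_mult_nth by (simp add: proj_def algebra_simps)

lemma norm_proj_offdiag: "cmod (proj \<psi> $ 1 $ 2) = cmod (\<psi>$1) * cmod (\<psi>$2)"
  by (simp add: proj_def norm_mult)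

lemma trace_sld_sq_pure:
  assumes unit: "braket \<phi> \<phi> = 1" and sld: "is_sld (proj \<phi>) D L"
    and centered: "braket \<phi> (D *v \<phi>) = 0"
  shows "trace (L ** L ** proj \<phi>) = 4 * braket (D *v \<phi>) (D *v \<phi>)"
proof -
  have herm: "hermitian L" and D: "D = (1/2) *\<^sub>R (L ** proj \<phi> + proj \<phi> ** L)"
    using sld unfolding is_sld_def by auto
  define c where "c = braket \<phi> (L *v \<phi>)"
  have "D *v \<phi> = (1/2) *\<^sub>R (L *v (proj \<phi> *v \<phi>) + proj \<phi> *v (L *v \<phi>))"
    unfolding D scaleR_matrix_vector_mult matrix_vector_mult_add_rdistrib matrix_vector_mul_assoc ..
  also have "\<dots> = (1/2) *\<^sub>R (L *v \<phi> + c *s \<phi>)"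
    unfolding proj_mult_vec unit c_def by simp
  finally have D\<phi>: "D *v \<phi> = (1/2) *\<^sub>R (L *v \<phi> + c *s \<phi>)" .
  have "braket \<phi> (D *v \<phi>) = (1/2) * (c + c * braket \<phi> \<phi>)"
    unfolding D\<phi> braket_2 c_def by simp (simp add: scaleR_conv_of_real algebra_simps)
  then have "c = 0"
    using centered unit by simp
  then have L\<phi>: "L *v \<phi> = 2 *\<^sub>R (D *v \<phi>)"
    using D\<phi> by simp
  have "trace (L ** L ** proj \<phi>) = braket \<phi> (L *v (L *v \<phi>))"
    by (simp add: trace_mult_proj matrix_vector_mul_assoc)
  also have "\<dots> = braket (L *v \<phi>) (L *v \<phi>)"
    by (rule braket_hermitian[OF herm])
  also have "\<dots> = 4 * braket (D *v \<phi>) (D *v \<phi>)"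
    unfolding L\<phi> braket_2 by (simp add: scaleR_conv_of_real algebra_simps)
  finally show ?thesis .
qed

text \<open>The commutator \<open>\<i>[diag a, P]\<close>, written entrywise.\<close>
definition icomm :: "(2 \<Rightarrow> real) \<Rightarrow> qmat \<Rightarrow> qmat" where
  "icomm a P = (\<chi> i j. \<i> * of_real (a i - a j) * P$i$j)"

lemma hermitian_icomm_proj: "hermitian (icomm a (proj \<phi>))"
  by (simp add: hermitian_def qmat_eq_iff adj_def icomm_def proj_def algebra_simps)

text \<open>As \<open>P\<^sup>2 = P\<close> for a pure state, \<open>D = \<i>[H, P]\<close> satisfies \<open>D = D P + P D\<close>,
  so \<open>2 D\<close> is an SLD.\<close>
lemma is_sld_icomm_proj:
  assumes unit: "braket \<phi> \<phi> = 1"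
  shows "is_sld (proj \<phi>) (icomm a (proj \<phi>)) (2 *\<^sub>R icomm a (proj \<phi>))"
proof -
  have "cnj (\<phi>$1) * \<phi>$1 + cnj (\<phi>$2) * \<phi>$2 = 1"
    using unit by (simp add: braket_2)
  then have "icomm a (proj \<phi>) = icomm a (proj \<phi>) ** proj \<phi> + proj \<phi> ** icomm a (proj \<phi>)"
    by (simp add: qmat_eq_iff qmat_mult_nth icomm_def proj_def) algebra
  then show ?thesis
    unfolding is_sld_def
    by (simp add: hermitian_scaleR hermitian_icomm_proj matrix_scalar_ac scalar_matrix_assoc[symmetric]
        scaleR_right_distrib[symmetric])
qed

lemma braket_icomm_proj: "braket \<phi> (icomm a (proj \<phi>) *v \<phi>) = 0"
  by (simp add: braket_2 qmat_vec_mult_nth icomm_def proj_def) algebra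

lemma braket_icomm_proj_self:
  assumes unit: "braket \<phi> \<phi> = 1"
  shows "braket (icomm a (proj \<phi>) *v \<phi>) (icomm a (proj \<phi>) *v \<phi>)
    = of_real ((a 1 - a 2)^2 * (cmod (\<phi>$1) * cmod (\<phi>$2))^2)"
proof -
  have "cnj (\<phi>$1) * \<phi>$1 + cnj (\<phi>$2) * \<phi>$2 = 1"
    using unit by (simp add: braket_2)
  then have "braket (icomm a (proj \<phi>) *v \<phi>) (icomm a (proj \<phi>) *v \<phi>)
      = of_real ((a 1 - a 2)^2) * (cnj (\<phi>$1) * \<phi>$1) * (cnj (\<phi>$2) * \<phi>$2)"
    by (simp add: braket_2 qmat_vec_mult_nth icomm_def proj_def) (insert i_squared, algebra)
  then show ?thesis
    by (simp add: cnj_mult_self power_mult_distrib)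
qed

lemma qfi_entry_icomm_proj:
  fixes a :: "2 \<Rightarrow> real"
  assumes unit: "braket \<phi> \<phi> = 1"
  defines "L \<equiv> sld (proj \<phi>) (icomm a (proj \<phi>))"
  shows "Re (trace (L ** L ** proj \<phi>)) = 4 * (a 1 - a 2)^2 * (cmod (\<phi>$1) * cmod (\<phi>$2))^2"
proof -
  have "is_sld (proj \<phi>) (icomm a (proj \<phi>)) L"
    unfolding L_def sld_def by (rule someI, rule is_sld_icomm_proj[OF unit])
  then have "trace (L ** L ** proj \<phi>) = 4 * braket (icomm a (proj \<phi>) *v \<phi>) (icomm a (proj \<phi>) *v \<phi>)"
    by (rule trace_sld_sq_pure[OF unit _ braket_icomm_proj])
  then show ?thesis
    unfolding braket_icomm_proj_self[OF unit] by simp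
qed

section \<open>Encoding by diagonal generators\<close>

definition diag :: "(2 \<Rightarrow> complex) \<Rightarrow> qmat" where
  "diag d = (\<chi> i j. if i = j then d i else 0)"

lemma diag_of_hermitian_diagonal:
  assumes "hermitian Z" "diagonal_mat Z"
  shows "Z = diag (\<lambda>k. of_real (Re (Z$k$k)))"
proof -
  have "Z$1$2 = 0" "Z$2$1 = 0"
    using assms(2) unfolding diagonal_mat_def by auto
  then show ?thesis
    using Im_hermitian_diag[OF assms(1)] by (simp add: qmat_eq_iff diag_def complex_eq_iff)
qed

lemma orthonormal_diag_gap:
  fixes a b :: "2 \<Rightarrow> real"
  defines "A \<equiv> diag (\<lambda>k. of_real (a k))" and "B \<equiv> diag (\<lambda>k. of_real (b k))"
  assumes "trace (A ** A) = 1" "trace (B ** B) = 1" "trace (A ** B) = 0"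
  shows "(a 1 - a 2)^2 + (b 1 - b 2)^2 = 2"
proof -
  have trace_diag: "trace (diag (\<lambda>k. of_real (x k)) ** diag (\<lambda>k. of_real (y k)))
      = of_real (x 1 * y 1 + x 2 * y 2)" for x y
    by (simp add: trace_qmat qmat_mult_nth diag_def)
  have rows: "(a 1)^2 + (a 2)^2 = 1" "(b 1)^2 + (b 2)^2 = 1" "a 1 * b 1 + a 2 * b 2 = 0"
    using assms(3-5) unfolding A_def B_def trace_diag of_real_eq_1_iff of_real_eq_0_iff
    by (simp_all add: power2_eq_square)
  text \<open>The rows of the orthogonal matrix \<open>(a, b)\<close> are orthonormal, hence so are its columns.\<close>
  then have "a 1 * a 2 + b 1 * b 2 = 0"
    by algebra
  then show ?thesis
    using rows by (simp add: power2_diff algebra_simps)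
qed

lemma mpow_diag: "mpow (diag d) n = diag (\<lambda>i. d i ^ n)"
proof (induction n)
  case 0
  show ?case by (simp add: qmat_eq_iff diag_def mat_def)
next
  case (Suc n)
  show ?case unfolding mpow.simps Suc.IH by (simp add: qmat_eq_iff qmat_mult_nth diag_def)
qed

lemma mexp_diag: "mexp (diag d) = diag (\<lambda>i. exp (d i))"
proof -
  have partial_sums: "(\<Sum>m<n. (1 / fact m) *\<^sub>R mpow (diag d) m) = diag (\<lambda>i. \<Sum>m<n. d i ^ m /\<^sub>R fact m)" for n
    unfolding mpow_diag by (simp add: vec_eq_iff diag_def sum_component divide_inverse_commute)
  have "(\<lambda>n. \<Sum>m<n. d i ^ m /\<^sub>R fact m) \<longlonglongrightarrow> exp (d i)" for i
    using exp_converges unfolding sums_def .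
  then have "(\<lambda>n. diag (\<lambda>i. \<Sum>m<n. d i ^ m /\<^sub>R fact m)) \<longlonglongrightarrow> diag (\<lambda>i. exp (d i))"
    unfolding diag_def by (intro tendsto_vec_lambda) auto
  then have "(\<lambda>n. (1 / fact n) *\<^sub>R mpow (diag d) n) sums diag (\<lambda>i. exp (d i))"
    unfolding sums_def partial_sums .
  then show ?thesis
    unfolding mexp_def by (rule sums_unique[symmetric])
qed

definition phase :: "(2 \<Rightarrow> real) \<Rightarrow> (2 \<Rightarrow> real) \<Rightarrow> qvec \<Rightarrow> real \<Rightarrow> real \<Rightarrow> qvec" where
  "phase a b \<psi> s t = (\<chi> k. exp (\<i> * of_real (s * a k + t * b k)) * \<psi>$k)"

lemma enc_family_diag:
  "enc_family (diag (\<lambda>k. of_real (a k))) (diag (\<lambda>k. of_real (b k))) \<psi> s t = proj (phase a b \<psi> s t)"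
proof -
  define E where "E k = exp (\<i> * of_real (s * a k + t * b k))" for k
  let ?H = "s *\<^sub>R diag (\<lambda>k. of_real (a k)) + t *\<^sub>R diag (\<lambda>k. of_real (b k))"
  have gen: "cmult \<i> ?H = diag (\<lambda>k. \<i> * of_real (s * a k + t * b k))"
    by (simp add: qmat_eq_iff diag_def cmult_def) (simp add: scaleR_conv_of_real algebra_simps)
  have U: "mexp (cmult \<i> ?H) = diag E"
    unfolding gen mexp_diag E_def ..
  have gen_inv: "cmult (- \<i>) ?H = diag (\<lambda>k. cnj (\<i> * of_real (s * a k + t * b k)))"
    by (simp add: qmat_eq_iff diag_def cmult_def) (simp add: scaleR_conv_of_real algebra_simps)
  have U_inv: "mexp (cmult (- \<i>) ?H) = diag (\<lambda>k. cnj (E k))"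
    unfolding gen_inv mexp_diag E_def exp_cnj ..
  show ?thesis
    unfolding enc_family_def U U_inv
    by (simp add: qmat_eq_iff qmat_mult_nth diag_def proj_def phase_def E_def algebra_simps)
qed

lemma proj_phase_nth:
  "proj (phase a b \<psi> s t) $ i $ j
    = exp (\<i> * of_real (s * (a i - a j) + t * (b i - b j))) * (\<psi>$i * cnj (\<psi>$j))"
proof -
  have "proj (phase a b \<psi> s t) $ i $ j
      = exp (\<i> * of_real (s * a i + t * b i)) * cnj (exp (\<i> * of_real (s * a j + t * b j)))
        * (\<psi>$i * cnj (\<psi>$j))"
    by (simp add: proj_def phase_def algebra_simps)
  also have "\<dots> = exp (\<i> * of_real (s * a i + t * b i) - \<i> * of_real (s * a j + t * b j))
        * (\<psi>$i * cnj (\<psi>$j))"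
    by (simp add: exp_cnj exp_diff exp_minus exp_add field_simps)
  finally show ?thesis
    by (simp add: algebra_simps)
qed

lemma has_vector_derivative_exp_phase:
  "((\<lambda>s::real. exp (\<i> * of_real (s * \<delta> + c)) * K) has_vector_derivative
     \<i> * (of_real \<delta> * (exp (\<i> * of_real (s0 * \<delta> + c)) * K))) (at s0)"
proof -
  have "((\<lambda>z. exp (\<i> * (z * of_real \<delta> + of_real c)) * K) has_field_derivative
         exp (\<i> * (of_real s0 * of_real \<delta> + of_real c)) * (\<i> * of_real \<delta>) * K) (at (of_real s0))"
    by (auto intro!: derivative_eq_intros)
  from has_vector_derivative_real_field[OF this]
  show ?thesis by (simp add: algebra_simps)
qed

lemma has_vector_derivative_proj_phase:
  "((\<lambda>s. proj (phase a b \<psi> s t)) has_vector_derivative icomm a (proj (phase a b \<psi> s0 t))) (at s0)"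
proof (intro has_vector_derivative_vec)
  fix i j
  show "((\<lambda>s. proj (phase a b \<psi> s t) $ i $ j) has_vector_derivative
      icomm a (proj (phase a b \<psi> s0 t)) $ i $ j) (at s0)"
    unfolding proj_phase_nth icomm_def vec_lambda_beta mult.assoc
    by (rule has_vector_derivative_exp_phase)
qed

lemma norm_phase_nth: "cmod (phase a b \<psi> s t $ k) = cmod (\<psi>$k)"
  by (simp add: phase_def norm_mult)

lemma unit_vec_phase: "unit_vec \<psi> \<Longrightarrow> unit_vec (phase a b \<psi> s t)"
  by (simp add: unit_vec_def norm_phase_nth)

lemma qfi_mean_enc_family_diag:
  assumes "unit_vec \<psi>"
  shows "qfi_mean (enc_family (diag (\<lambda>k. of_real (a k))) (diag (\<lambda>k. of_real (b k))) \<psi>) s t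
    = 2 * ((a 1 - a 2)^2 + (b 1 - b 2)^2) * (cmod (\<psi>$1) * cmod (\<psi>$2))^2"
proof -
  define f where "f = enc_family (diag (\<lambda>k. of_real (a k))) (diag (\<lambda>k. of_real (b k))) \<psi>"
  define \<phi> where "\<phi> = phase a b \<psi> s t"
  have f: "f = (\<lambda>s t. proj (phase a b \<psi> s t))"
    unfolding f_def enc_family_diag ..
  have unit: "braket \<phi> \<phi> = 1"
    unfolding \<phi>_def by (rule braket_self_unit[OF unit_vec_phase[OF assms]])
  have "pd1 f s t = icomm a (proj \<phi>)"
    unfolding pd1_def f \<phi>_def by (rule vector_derivative_at[OF has_vector_derivative_proj_phase])
  then have qfi1: "qfi f s t 1 1 = 4 * (a 1 - a 2)^2 * (cmod (\<phi>$1) * cmod (\<phi>$2))^2"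
    using qfi_entry_icomm_proj[OF unit] unfolding qfi_def f \<phi>_def by simp
  have "phase a b \<psi> s t' = phase b a \<psi> t' s" for t'
    unfolding phase_def by (simp add: add.commute)
  then have "pd2 f s t = icomm b (proj \<phi>)"
    unfolding pd2_def f \<phi>_def by (simp add: vector_derivative_at[OF has_vector_derivative_proj_phase])
  then have qfi2: "qfi f s t 2 2 = 4 * (b 1 - b 2)^2 * (cmod (\<phi>$1) * cmod (\<phi>$2))^2"
    using qfi_entry_icomm_proj[OF unit] unfolding qfi_def f \<phi>_def by simp
  show ?thesis
    unfolding f_def[symmetric] qfi_mean_def qfi1 qfi2 \<phi>_def norm_phase_nth by (simp add: algebra_simps)
qed

section \<open>Optimal ensembles\<close>

definition mean_offdiag_sq :: "(real \<times> qvec) list \<Rightarrow> real" where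
  "mean_offdiag_sq E = sum_list (map (\<lambda>(p, \<psi>). p * (cmod (\<psi>$1) * cmod (\<psi>$2))^2) E)"

lemma offdiag_sq_le_mean:
  assumes E: "is_ensemble \<rho> E"
  shows "(cmod (\<rho>$1$2))^2 \<le> mean_offdiag_sq E"
proof -
  define I where "I = {..<length E}"
  define p where "p i = fst (E!i)" for i
  define x where "x i = cmod (snd (E!i) $ 1) * cmod (snd (E!i) $ 2)" for i
  have sum_list_eq: "sum_list (map f E) = (\<Sum>i\<in>I. f (E!i))" for f :: "real \<times> qvec \<Rightarrow> 'a::comm_monoid_add"
    unfolding I_def by (simp add: sum_list_sum_nth atLeast0LessThan)
  have p_nonneg: "0 \<le> p i" if "i \<in> I" for i
  proof -
    have "(p i, snd (E!i)) \<in> set E"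
      using that by (simp add: I_def p_def)
    then show ?thesis
      using E unfolding is_ensemble_def by (auto intro: less_imp_le)
  qed
  have p_sum: "(\<Sum>i\<in>I. p i) = 1"
    using E unfolding is_ensemble_def sum_list_eq p_def by simp
  have "\<rho>$1$2 = (\<Sum>i\<in>I. p i *\<^sub>R proj (snd (E!i)) $ 1 $ 2)"
    using E unfolding is_ensemble_def sum_list_eq p_def by (simp add: sum_component case_prod_beta)
  then have "cmod (\<rho>$1$2) \<le> (\<Sum>i\<in>I. p i * x i)"
    using p_nonneg by (auto simp: x_def norm_proj_offdiag intro!: order_trans[OF norm_sum] sum_mono)
  then have "(cmod (\<rho>$1$2))^2 \<le> (\<Sum>i\<in>I. p i * x i)^2"
    by (simp add: power_mono)
  also have "\<dots> \<le> (\<Sum>i\<in>I. p i * (x i)^2)"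
    using convex_on_sum[OF _ _ convex_power2 p_sum p_nonneg] p_sum unfolding I_def by fastforce
  also have "\<dots> = mean_offdiag_sq E"
    unfolding mean_offdiag_sq_def sum_list_eq p_def x_def by (simp add: case_prod_beta)
  finally show ?thesis .
qed

lemma mean_offdiag_sq_const:
  assumes E: "is_ensemble \<rho> E" and m: "\<And>\<psi>. \<psi> \<in> snd ` set E \<Longrightarrow> cmod (\<psi>$1) * cmod (\<psi>$2) = m"
  shows "mean_offdiag_sq E = m^2"
proof -
  have "cmod (\<psi>$1) * cmod (\<psi>$2) = m" if "(p, \<psi>) \<in> set E" for p \<psi>
    using m that by force
  then have "mean_offdiag_sq E = sum_list (map (\<lambda>x. fst x * m^2) E)"
    unfolding mean_offdiag_sq_def by (intro arg_cong[where f = sum_list] map_cong) auto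
  also have "\<dots> = m^2"
    using E unfolding sum_list_mult_const is_ensemble_def by simp
  finally show ?thesis .
qed

lemma ensemble_mixture:
  assumes u: "0 \<le> u" "u \<le> 1" and unit: "unit_vec \<psi>" "unit_vec \<phi>"
  shows "\<exists>E. is_ensemble ((1 - u) *\<^sub>R proj \<psi> + u *\<^sub>R proj \<phi>) E \<and> snd ` set E \<subseteq> {\<psi>, \<phi>}"
proof -
  consider "u = 0" | "u = 1" | "0 < u" "u < 1"
    using u by fastforce
  then show ?thesis
  proof cases
    case 1
    then show ?thesis
      using unit by (intro exI[of _ "[(1, \<psi>)]"]) (simp add: is_ensemble_def)
  next
    case 2
    then show ?thesis
      using unit by (intro exI[of _ "[(1, \<phi>)]"]) (simp add: is_ensemble_def)
  next
    case 3
    then show ?thesis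
      using unit by (intro exI[of _ "[(1 - u, \<psi>), (u, \<phi>)]"]) (simp add: is_ensemble_def)
  qed
qed

definition dens_mat :: "real \<Rightarrow> complex \<Rightarrow> qmat" where
  "dens_mat r c = vector [vector [of_real r, c], vector [cnj c, of_real (1 - r)]]"

lemma density_op_eq_dens_mat:
  assumes "density_op \<rho>"
  shows "\<rho> = dens_mat (Re (\<rho>$1$1)) (\<rho>$1$2)"
proof -
  have herm: "hermitian \<rho>" and "trace \<rho> = 1"
    using assms unfolding density_op_def by auto
  then have "\<rho>$1$1 + \<rho>$2$2 = 1"
    unfolding trace_qmat by simp
  moreover have "Im (\<rho>$1$1) = 0" "Im (\<rho>$2$2) = 0" "\<rho>$2$1 = cnj (\<rho>$1$2)"
    using Im_hermitian_diag[OF herm] hermitian_cnj_nth[OF herm] by simp_all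
  ultimately show ?thesis
    by (simp add: qmat_eq_iff dens_mat_def complex_eq_iff)
qed

lemma psd_dens_mat_det:
  assumes "psd (dens_mat r c)"
  shows "(cmod c)^2 \<le> r * (1 - r)"
proof -
  have form: "0 \<le> Re (cnj x * of_real r * x + cnj x * c * y + cnj y * cnj c * x + cnj y * of_real (1 - r) * y)" for x y
    using assms[unfolded psd_def, rule_format, of "vector [x, y]"] by (simp add: sum_2 dens_mat_def)
  have cc: "c * cnj c = of_real ((cmod c)^2)" "cnj c * c = of_real ((cmod c)^2)"
    using cnj_mult_self[of c] by (simp_all add: mult.commute)
  have "0 \<le> r * (r * (1 - r) - (cmod c)^2)"
    using form[of "- c" "of_real r"] by (simp add: cc algebra_simps)
  moreover have "0 \<le> (1 - r) * (r * (1 - r) - (cmod c)^2)"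
    using form[of "of_real (1 - r)" "- cnj c"] by (simp add: cc algebra_simps)
  ultimately have "0 \<le> r * (r * (1 - r) - (cmod c)^2) + (1 - r) * (r * (1 - r) - (cmod c)^2)"
    by (rule add_nonneg_nonneg)
  then show ?thesis
    by (simp add: algebra_simps)
qed

lemma pure_dens_mat:
  assumes q: "0 \<le> q" "q \<le> 1" "q * (1 - q) = (cmod c)^2"
  shows "\<exists>\<psi>. unit_vec \<psi> \<and> proj \<psi> = dens_mat q c"
proof -
  define \<psi>1 where "\<psi>1 = complex_of_real (sqrt q)"
  define \<psi>2 where "\<psi>2 = of_real (sqrt (1 - q)) * cis (- Arg c)"
  have unit: "unit_vec (vector [\<psi>1, \<psi>2])"
    using q by (simp add: unit_vec_def sum_2 \<psi>1_def \<psi>2_def norm_mult)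
  have e11: "\<psi>1 * cnj \<psi>1 = of_real q"
    using q by (simp add: \<psi>1_def flip: of_real_mult)
  have e12: "\<psi>1 * cnj \<psi>2 = c"
  proof -
    have "sqrt q * sqrt (1 - q) = cmod c"
      using q by (simp add: real_sqrt_mult[symmetric])
    then have "\<psi>1 * cnj \<psi>2 = rcis (cmod c) (Arg c)"
      by (simp add: \<psi>1_def \<psi>2_def rcis_def cis_cnj flip: of_real_mult)
    then show ?thesis
      by (simp add: rcis_cmod_Arg)
  qed
  then have e21: "\<psi>2 * cnj \<psi>1 = cnj c"
    by (metis complex_cnj_cnj complex_cnj_mult mult.commute)
  have "\<psi>2 * cnj \<psi>2 = of_real (1 - q) * (cis (- Arg c) * cis (Arg c))"
    using q unfolding \<psi>2_def by (simp add: cis_cnj algebra_simps flip: of_real_mult)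
  then have e22: "\<psi>2 * cnj \<psi>2 = of_real (1 - q)"
    using q by (simp add: cis_mult)
  show ?thesis
    using unit e11 e12 e21 e22 by (intro exI[of _ "vector [\<psi>1, \<psi>2]"]) (simp add: qmat_eq_iff proj_def dens_mat_def)
qed

lemma dens_mat_segment:
  "(1 - u) *\<^sub>R dens_mat q c + u *\<^sub>R dens_mat q' c = dens_mat ((1 - u) * q + u * q') c"
  by (simp add: qmat_eq_iff dens_mat_def) (simp add: scaleR_conv_of_real algebra_simps)

text \<open>\<open>q\<^sub>1, q\<^sub>2\<close> are the roots of \<open>q (1 - q) = \<bar>c\<bar>\<^sup>2\<close>: the two pure states with off-diagonal
  entry \<open>c\<close> sit above and below \<open>dens_mat r c\<close> on the Bloch sphere, and \<open>r\<close> lies between them.\<close>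
lemma dens_mat_mixture_of_pure:
  assumes det: "(cmod c)^2 \<le> r * (1 - r)"
  shows "\<exists>u \<psi>1 \<psi>2. 0 \<le> u \<and> u \<le> 1 \<and> unit_vec \<psi>1 \<and> unit_vec \<psi>2
    \<and> proj \<psi>1 $ 1 $ 2 = c \<and> proj \<psi>2 $ 1 $ 2 = c
    \<and> dens_mat r c = (1 - u) *\<^sub>R proj \<psi>1 + u *\<^sub>R proj \<psi>2"
proof -
  define s where "s = sqrt (1 - 4 * (cmod c)^2)"
  have "4 * (cmod c)^2 \<le> 1"
    using det sum_power2_ge_zero[of "2 * r - 1" 0] by (simp add: power2_eq_square algebra_simps)
  then have s: "0 \<le> s" "s \<le> 1" "s^2 = 1 - 4 * (cmod c)^2"
    unfolding s_def by auto
  define q\<^sub>1 where "q\<^sub>1 = (1 - s) / 2"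
  define q\<^sub>2 where "q\<^sub>2 = (1 + s) / 2"
  have "q\<^sub>1 * (1 - q\<^sub>1) = (cmod c)^2" "q\<^sub>2 * (1 - q\<^sub>2) = (cmod c)^2"
    using s(3) unfolding q\<^sub>1_def q\<^sub>2_def by (simp_all add: power2_eq_square field_simps)
  moreover have "0 \<le> q\<^sub>1" "q\<^sub>1 \<le> 1" "0 \<le> q\<^sub>2" "q\<^sub>2 \<le> 1"
    using s unfolding q\<^sub>1_def q\<^sub>2_def by auto
  ultimately obtain \<psi>1 \<psi>2 where \<psi>1: "unit_vec \<psi>1" "proj \<psi>1 = dens_mat q\<^sub>1 c"
    and \<psi>2: "unit_vec \<psi>2" "proj \<psi>2 = dens_mat q\<^sub>2 c"
    using pure_dens_mat by metis
  have "\<bar>1 - 2 * r\<bar> = sqrt ((1 - 2 * r)^2)"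
    by simp
  also have "\<dots> \<le> s"
    unfolding s_def using det by (intro real_sqrt_le_mono) (simp add: power2_eq_square algebra_simps)
  finally have "r \<in> closed_segment q\<^sub>1 q\<^sub>2"
    using s unfolding q\<^sub>1_def q\<^sub>2_def closed_segment_eq_real_ivl by auto
  then obtain u where u: "0 \<le> u" "u \<le> 1" "r = (1 - u) * q\<^sub>1 + u * q\<^sub>2"
    unfolding in_segment by auto
  then have "dens_mat r c = (1 - u) *\<^sub>R proj \<psi>1 + u *\<^sub>R proj \<psi>2"
    unfolding \<psi>1(2) \<psi>2(2) dens_mat_segment by simp
  moreover have "proj \<psi>1 $ 1 $ 2 = c" "proj \<psi>2 $ 1 $ 2 = c"
    unfolding \<psi>1(2) \<psi>2(2) by (simp_all add: dens_mat_def)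
  ultimately show ?thesis
    using u \<psi>1(1) \<psi>2(1) by blast
qed

lemma mean_offdiag_sq_attained:
  assumes \<rho>: "density_op \<rho>"
  shows "\<exists>E. is_ensemble \<rho> E \<and> mean_offdiag_sq E = (cmod (\<rho>$1$2))^2"
proof -
  define c where "c = \<rho>$1$2"
  have \<rho>_eq: "\<rho> = dens_mat (Re (\<rho>$1$1)) c"
    unfolding c_def by (rule density_op_eq_dens_mat[OF \<rho>])
  then have "(cmod c)^2 \<le> Re (\<rho>$1$1) * (1 - Re (\<rho>$1$1))"
    using \<rho> unfolding density_op_def by (metis psd_dens_mat_det)
  then obtain u \<psi>1 \<psi>2 where u: "0 \<le> u" "u \<le> 1" and unit: "unit_vec \<psi>1" "unit_vec \<psi>2"
    and offdiag: "proj \<psi>1 $ 1 $ 2 = c" "proj \<psi>2 $ 1 $ 2 = c"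
    and mixture: "\<rho> = (1 - u) *\<^sub>R proj \<psi>1 + u *\<^sub>R proj \<psi>2"
    using dens_mat_mixture_of_pure \<rho>_eq by metis
  obtain E where E: "is_ensemble \<rho> E" "snd ` set E \<subseteq> {\<psi>1, \<psi>2}"
    using ensemble_mixture[OF u unit] mixture by auto
  have "cmod (\<psi>$1) * cmod (\<psi>$2) = cmod c" if "\<psi> \<in> snd ` set E" for \<psi>
    using that E(2) offdiag unfolding norm_proj_offdiag[symmetric] by auto
  then show ?thesis
    using E(1) mean_offdiag_sq_const unfolding c_def by blast
qed

section \<open>The convex roof\<close>

lemma sigma_sq_sum:
  assumes "hermitian \<rho>"
  shows "(Re (trace (sigma1 ** \<rho>)))^2 + (Re (trace (sigma2 ** \<rho>)))^2 = 4 * (cmod (\<rho>$1$2))^2"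
proof -
  have "\<rho>$2$1 = cnj (\<rho>$1$2)"
    using hermitian_cnj_nth[OF assms] by simp
  then have "Re (trace (sigma1 ** \<rho>)) = 2 * Re (\<rho>$1$2)" "Re (trace (sigma2 ** \<rho>)) = - 2 * Im (\<rho>$1$2)"
    by (simp_all add: trace_qmat qmat_mult_nth sigma1_def sigma2_def)
  then show ?thesis
    by (simp add: cmod_power2 algebra_simps)
qed

lemma ens_values_diag:
  assumes gap: "(a 1 - a 2)^2 + (b 1 - b 2)^2 = 2"
  shows "ens_values (diag (\<lambda>k. of_real (a k))) (diag (\<lambda>k. of_real (b k))) t1 t2 \<rho>
    = {4 * mean_offdiag_sq E | E. is_ensemble \<rho> E}"
proof -
  let ?enc = "enc_family (diag (\<lambda>k. of_real (a k))) (diag (\<lambda>k. of_real (b k)))"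
  have "sum_list (map (\<lambda>(p, \<psi>). p * qfi_mean (?enc \<psi>) t1 t2) E) = 4 * mean_offdiag_sq E"
    if E: "is_ensemble \<rho> E" for E
  proof -
    have "unit_vec \<psi>" if "(p, \<psi>) \<in> set E" for p \<psi>
      using E that unfolding is_ensemble_def by auto
    then have "map (\<lambda>(p, \<psi>). p * qfi_mean (?enc \<psi>) t1 t2) E
        = map (\<lambda>x. 4 * (\<lambda>(p, \<psi>). p * (cmod (\<psi>$1) * cmod (\<psi>$2))^2) x) E"
      by (intro map_cong) (auto simp: qfi_mean_enc_family_diag gap)
    then show ?thesis
      unfolding mean_offdiag_sq_def sum_list_const_mult[symmetric] by (rule arg_cong)
  qed
  then show ?thesis
    unfolding ens_values_def by (intro Collect_cong) metis
qed

theorem mainTheorem7: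
  fixes Z1 Z2 \<rho> :: "complex^2^2" and t1 t2 :: real
  assumes "hermitian Z1" and "hermitian Z2"
    and "diagonal_mat Z1" and "diagonal_mat Z2"
    and "trace (Z1 ** Z1) = 1" and "trace (Z2 ** Z2) = 1"
    and "trace (Z1 ** Z2) = 0" and "trace (Z2 ** Z1) = 0"
    and "density_op \<rho>"
  shows "coh Z1 Z2 t1 t2 \<rho> = (Re (trace (sigma1 ** \<rho>)))^2 + (Re (trace (sigma2 ** \<rho>)))^2
     \<and> (Re (trace (sigma1 ** \<rho>)))^2 + (Re (trace (sigma2 ** \<rho>)))^2 \<in> ens_values Z1 Z2 t1 t2 \<rho>"
proof -
  define a where "a k = Re (Z1$k$k)" for k
  define b where "b k = Re (Z2$k$k)" for k
  have Z1: "Z1 = diag (\<lambda>k. of_real (a k))" and Z2: "Z2 = diag (\<lambda>k. of_real (b k))"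
    unfolding a_def b_def using assms(1-4) by (simp_all add: diag_of_hermitian_diagonal)
  have "(a 1 - a 2)^2 + (b 1 - b 2)^2 = 2"
    using assms(5-7) unfolding Z1 Z2 by (rule orthonormal_diag_gap)
  then have ens_values_eq: "ens_values Z1 Z2 t1 t2 \<rho> = {4 * mean_offdiag_sq E | E. is_ensemble \<rho> E}"
    unfolding Z1 Z2 by (rule ens_values_diag)
  have sigma: "(Re (trace (sigma1 ** \<rho>)))^2 + (Re (trace (sigma2 ** \<rho>)))^2 = 4 * (cmod (\<rho>$1$2))^2"
    using assms(9) unfolding density_op_def by (simp add: sigma_sq_sum)
  have least: "4 * (cmod (\<rho>$1$2))^2 \<in> ens_values Z1 Z2 t1 t2 \<rho>"
    using mean_offdiag_sq_attained[OF assms(9)] unfolding ens_values_eq by force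
  have lower: "4 * (cmod (\<rho>$1$2))^2 \<le> x" if "x \<in> ens_values Z1 Z2 t1 t2 \<rho>" for x
    using that offdiag_sq_le_mean unfolding ens_values_eq by force
  show ?thesis
    unfolding sigma coh_def using cInf_eq_minimum[OF least lower] least by simp
qed

end
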